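(* Let $p,q,r,s\ge 0$ be integers with $3+p+q=3+r+s=:n$, and let $H$ be a dephased complex Hadamard matrix of order $n$ of the block form \[H=\begin{bmatrix}1&1&1&1^p&1^q\\ 1&a&b&x&y\\ 1&b&a&x&-y\\ (1^r)^T&z^T&z^T&A&B\\ (1^s)^T&w^T&-w^T&C&D\end{bmatrix},\] where $a,b\in\mathbb{C}$ have modulus $1$, $x\in\mathbb{C}^p$, $y\in\mathbb{C}^q$, $z\in\mathbb{C}^r$, $w\in\mathbb{C}^s$ are row vectors, and $A,B,C,D$ are complex matrices of sizes $r\times p$, $r\times q$, $s\times p$, $s\times q$. For a complex number $\alpha$ of modulus $1$, let $H(\alpha)$ be the matrix obtained from $H$ by replacing $y$ by $\alpha y$ (so $-y$ becomes $-\alpha y$) and $w$ by $\overline{\alpha}w$ (so $-w$ becomes $-\overline{\alpha}w$). Then $H(\alpha)$ is a complex Hadamard matrix for every unimodular $\alpha$. If moreover $b=a$, then for all unimodular $\alpha,\gamma$ the matrix obtained from $H$ by replacing $y$ by $\alpha y$ and $w$ by $\gamma w$ is a complex Hadamard matrix.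
   Context: A complex Hadamard matrix of order $n$ is an $n\times n$ complex matrix with all entries of modulus $1$ satisfying $HH^\ast=nI_n$; it is dephased if its first row and first column consist of $1$'s. $1^k$ denotes the all-ones row vector of length $k$ and $^T$ denotes transpose. *)

theory Defs
  imports "Jordan_Normal_Form.Schur_Decomposition"
begin

definition complex_hadamard :: "nat \<Rightarrow> complex mat \<Rightarrow> bool" where
  "complex_hadamard n H \<longleftrightarrow> H \<in> carrier_mat n n \<and>
     (\<forall>i<n. \<forall>j<n. cmod (H $$ (i,j)) = 1) \<and>
     H * mat_adjoint H = of_nat n \<cdot>\<^sub>m 1\<^sub>m n"

text \<open>Rows: 0, 1, 2, then 3..3+r-1, then 3+r..; columns: 0, 1, 2,
  then 3..3+p-1, then 3+p...\<close>
definition block_mat ::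
  "nat \<Rightarrow> nat \<Rightarrow> nat \<Rightarrow> nat \<Rightarrow> complex \<Rightarrow> complex \<Rightarrow>
   complex vec \<Rightarrow> complex vec \<Rightarrow> complex vec \<Rightarrow> complex vec \<Rightarrow>
   complex mat \<Rightarrow> complex mat \<Rightarrow> complex mat \<Rightarrow> complex mat \<Rightarrow> complex mat" where
  "block_mat p q r s a b x y z w A B C D =
     mat (3+p+q) (3+p+q) (\<lambda>(i,j).
       if i = 0 then 1
       else if i = 1 then
         (if j = 0 then 1 else if j = 1 then a else if j = 2 then b
          else if j < 3+p then x $ (j-3) else y $ (j-3-p))
       else if i = 2 then
         (if j = 0 then 1 else if j = 1 then b else if j = 2 then a
          else if j < 3+p then x $ (j-3) else - (y $ (j-3-p)))
       else if i < 3+r then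
         (if j = 0 then 1 else if j = 1 then z $ (i-3) else if j = 2 then z $ (i-3)
          else if j < 3+p then A $$ (i-3, j-3) else B $$ (i-3, j-3-p))
       else
         (if j = 0 then 1 else if j = 1 then w $ (i-3-r) else if j = 2 then - (w $ (i-3-r))
          else if j < 3+p then C $$ (i-3-r, j-3) else D $$ (i-3-r, j-3-p)))"

end

theory Submission
  imports Defs
begin

(* Write h for the entries of H and split the columns into the
   "fixed" columns 0 and 3..3+p-1, the "twin" columns 1,2 and the "sign"
   columns 3+p..n-1.  Passing from H to the twisted matrix multiplies, in every
   row, each column block by one constant: rows 1,2 get the factor \<alpha> on the sign
   columns and the last s rows get the factor \<beta> on the twin columns.  Hence the
   inner product of two rows changes only in its twin and sign parts, which get
   multiplied by unimodular factors.  Orthogonality of H, applied to the sum and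
   the difference of rows 1 and 2, shows that those parts vanish or cancel each
   other exactly in the configurations where the factors differ, provided
   \<beta> = cnj \<alpha> or a = b.  So H and its twist have the same Gram matrix H H^*. *)

definition row_ip :: "(nat \<Rightarrow> nat \<Rightarrow> complex) \<Rightarrow> nat set \<Rightarrow> nat \<Rightarrow> nat \<Rightarrow> complex" where
  "row_ip h J i k = (\<Sum>j\<in>J. h i j * cnj (h k j))"

lemma row_ip_swap: "row_ip h J k i = cnj (row_ip h J i k)"
  unfolding row_ip_def by (simp add: mult.commute)

lemma row_ip_scaled:
  assumes "\<And>j. j \<in> J \<Longrightarrow> f i j = c" "\<And>j. j \<in> J \<Longrightarrow> f k j = d"
  shows "row_ip (\<lambda>i j. h i j * f i j) J i k = c * cnj d * row_ip h J i k"
  unfolding row_ip_def sum_distrib_left by (intro sum.cong refl) (simp add: assms mult_ac)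

lemma unimodular_mult_cnj: "cmod c = 1 \<Longrightarrow> c * cnj c = 1"
  by (metis complex_norm_square mult.commute of_real_1 power_one)

lemma gram_entry:
  fixes M :: "complex mat"
  assumes "M \<in> carrier_mat n n" "i < n" "k < n"
  shows "(M * mat_adjoint M) $$ (i,k) = row_ip (\<lambda>i j. M $$ (i,j)) {..<n} i k"
  using assms unfolding mat_adjoint_def row_ip_def
  by (auto simp: scalar_prod_def mat_of_rows_def lessThan_atLeast0 intro!: sum.cong)

lemma complex_hadamard_same_gram:
  assumes H: "complex_hadamard n M" and M': "M' \<in> carrier_mat n n"
    and unit: "\<And>i j. i < n \<Longrightarrow> j < n \<Longrightarrow> cmod (M' $$ (i,j)) = 1"
    and ip: "\<And>i k. i < n \<Longrightarrow> k < n \<Longrightarrow>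
               row_ip (\<lambda>i j. M' $$ (i,j)) {..<n} i k = row_ip (\<lambda>i j. M $$ (i,j)) {..<n} i k"
  shows "complex_hadamard n M'"
proof -
  have M: "M \<in> carrier_mat n n" using H by (simp add: complex_hadamard_def)
  have "M' * mat_adjoint M' = M * mat_adjoint M"
  proof (rule eq_matI)
    fix i k assume "i < dim_row (M * mat_adjoint M)" "k < dim_col (M * mat_adjoint M)"
    then have ik: "i < n" "k < n" using M by (auto simp: mat_adjoint_def)
    show "(M' * mat_adjoint M') $$ (i,k) = (M * mat_adjoint M) $$ (i,k)"
      using gram_entry[OF M ik] gram_entry[OF M' ik] ip[OF ik] by simp
  qed (use M M' in \<open>auto simp: mat_adjoint_def\<close>)
  then show ?thesis using H M' unit by (simp add: complex_hadamard_def)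
qed

locale twin_rows =
  fixes h :: "nat \<Rightarrow> nat \<Rightarrow> complex" and n p :: nat and a b :: complex and W :: "nat set"
  assumes size: "3 + p \<le> n"
    and orth: "\<And>i k. i < n \<Longrightarrow> k < n \<Longrightarrow> i \<noteq> k \<Longrightarrow> row_ip h {..<n} i k = 0"
    and corner: "h 1 1 = a" "h 1 2 = b" "h 2 1 = b" "h 2 2 = a"
    and twins_fixed: "\<And>j. j < 3 + p \<Longrightarrow> j \<notin> {1,2} \<Longrightarrow> h 2 j = h 1 j"
    and twins_sign: "\<And>j. 3 + p \<le> j \<Longrightarrow> j < n \<Longrightarrow> h 2 j = - h 1 j"
    and odd_rows: "W \<subseteq> {..<n} - {1,2}"
    and odd: "\<And>m. m \<in> W \<Longrightarrow> h m 2 = - h m 1"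
    and even: "\<And>m. m < n \<Longrightarrow> m \<notin> W \<Longrightarrow> m \<notin> {1,2} \<Longrightarrow> h m 2 = h m 1"
begin

abbreviation fixed_cols :: "nat set" where "fixed_cols \<equiv> {..<3+p} - {1,2}"
abbreviation twin_cols :: "nat set" where "twin_cols \<equiv> {1,2}"
abbreviation sign_cols :: "nat set" where "sign_cols \<equiv> {3+p..<n}"

lemma row_ip_split:
  "row_ip g {..<n} i k = row_ip g fixed_cols i k + row_ip g twin_cols i k + row_ip g sign_cols i k"
proof -
  let ?f = "\<lambda>j. g i j * cnj (g k j)"
  have cols: "{..<n} = (fixed_cols \<union> twin_cols) \<union> sign_cols" using size by auto
  have "sum ?f {..<n} = sum ?f (fixed_cols \<union> twin_cols) + sum ?f sign_cols"
    unfolding cols by (rule sum.union_disjoint) auto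
  also have "sum ?f (fixed_cols \<union> twin_cols) = sum ?f fixed_cols + sum ?f twin_cols"
    by (rule sum.union_disjoint) auto
  finally show ?thesis unfolding row_ip_def .
qed

lemma twin_row_parts:
  "row_ip h fixed_cols 2 m = row_ip h fixed_cols 1 m"
  "row_ip h sign_cols 2 m = - row_ip h sign_cols 1 m"
  "row_ip h twin_cols 1 m = a * cnj (h m 1) + b * cnj (h m 2)"
  "row_ip h twin_cols 2 m = b * cnj (h m 1) + a * cnj (h m 2)"
  using corner by (simp_all add: row_ip_def twins_fixed twins_sign sum_negf[symmetric])

text \<open>Difference of the twin rows: an even row is orthogonal to rows 1, 2 on the
  sign columns alone.\<close>
lemma sign_part_even:
  assumes m: "m < n" "m \<notin> W" "m \<notin> {1,2}" and i: "i \<in> {1,2}"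
  shows "row_ip h sign_cols i m = 0"
proof -
  have "2 * row_ip h sign_cols 1 m = row_ip h {..<n} 1 m - row_ip h {..<n} 2 m"
    unfolding row_ip_split twin_row_parts even[OF m] by (simp add: algebra_simps)
  also have "\<dots> = 0" using orth[of 1 m] orth[of 2 m] m size by simp
  finally show ?thesis using i twin_row_parts(2)[of m] by auto
qed

text \<open>Sum of the twin rows: for an odd row the twin and sign parts cancel.\<close>
lemma twin_sign_cancel_odd:
  assumes m: "m \<in> W" and i: "i \<in> {1,2}"
  shows "row_ip h twin_cols i m + row_ip h sign_cols i m = 0"
proof -
  have mn: "m < n" "m \<notin> {1,2}" using m odd_rows by auto
  have "2 * row_ip h fixed_cols 1 m = row_ip h {..<n} 1 m + row_ip h {..<n} 2 m"
    unfolding row_ip_split twin_row_parts odd[OF m] by (simp add: algebra_simps)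
  also have "\<dots> = 0" using orth[of 1 m] orth[of 2 m] mn size by simp
  finally have "row_ip h fixed_cols 1 m = 0" by simp
  then have "row_ip h twin_cols 1 m + row_ip h sign_cols 1 m = 0"
    using orth[of 1 m] mn size by (simp add: row_ip_split)
  moreover have "row_ip h twin_cols 2 m + row_ip h sign_cols 2 m
                   = - (row_ip h twin_cols 1 m + row_ip h sign_cols 1 m)"
    unfolding twin_row_parts(2,3,4)[of m] odd[OF m] by (simp add: algebra_simps)
  ultimately show ?thesis using i by auto
qed

lemma twin_part_odd_sym_corner:
  assumes "a = b" "m \<in> W" "i \<in> {1,2}"
  shows "row_ip h twin_cols i m = 0"
  using assms twin_row_parts(3,4)[of m] odd[of m] by auto

lemma twin_part_even_odd:
  assumes "l < n" "l \<notin> W" "l \<notin> {1,2}" "m \<in> W"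
  shows "row_ip h twin_cols l m = 0"
  using even[OF assms(1-3)] odd[OF assms(4)] by (simp add: row_ip_def)

text \<open>The three kinds of rows, ordered twin < even < odd.\<close>
definition row_kind :: "nat \<Rightarrow> nat" where
  "row_kind i = (if i \<in> {1,2} then 0 else if i \<in> W then 2 else 1)"

lemma row_kind_iff:
  "row_kind i = 0 \<longleftrightarrow> i \<in> {1,2}"
  "row_kind i = 1 \<longleftrightarrow> i \<notin> {1,2} \<and> i \<notin> W"
  "row_kind i = 2 \<longleftrightarrow> i \<in> W"
  using odd_rows by (auto simp: row_kind_def)

lemma row_kind_le: "row_kind i \<le> 2"
  by (simp add: row_kind_def)

definition twist_factor :: "complex \<Rightarrow> complex \<Rightarrow> nat \<Rightarrow> nat \<Rightarrow> complex" where
  "twist_factor \<alpha> \<beta> i j =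
     (if j \<in> {1,2} then (if row_kind i = 2 then \<beta> else 1)
      else if 3 + p \<le> j then (if row_kind i = 0 then \<alpha> else 1) else 1)"

text \<open>Only the twin and sign parts change, by the factors U i * cnj (U k) and
  V i * cnj (V k); the equation saying that this change is harmless is
  invariant under swapping i and k, so only kind i < kind k needs checking.\<close>
lemma twist_preserves_row_ip:
  assumes units: "cmod \<alpha> = 1" "cmod \<beta> = 1" and cond: "\<beta> = cnj \<alpha> \<or> a = b"
    and ik: "i < n" "k < n"
  shows "row_ip (\<lambda>i j. h i j * twist_factor \<alpha> \<beta> i j) {..<n} i k = row_ip h {..<n} i k"
proof -
  define U where "U i = (if row_kind i = 2 then \<beta> else 1)" for i
  define V where "V i = (if row_kind i = 0 then \<alpha> else 1)" for i
  define balanced where "balanced i k \<longleftrightarrow>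
    U i * cnj (U k) * row_ip h twin_cols i k + V i * cnj (V k) * row_ip h sign_cols i k
      = row_ip h twin_cols i k + row_ip h sign_cols i k" for i k
  have unit_UV: "U i * cnj (U i) = 1" "V i * cnj (V i) = 1" for i
    using units unimodular_mult_cnj by (auto simp: U_def V_def)
  have swap: "balanced k i" if "balanced i k" for i k
    using arg_cong[OF that[unfolded balanced_def], of cnj]
    by (simp add: balanced_def row_ip_swap[of h _ k i] mult_ac)
  have ordered: "balanced i k" if "i < n" "k < n" "row_kind i \<le> row_kind k" for i k
  proof (cases "row_kind i = row_kind k")
    case True
    then show ?thesis using unit_UV by (simp add: balanced_def U_def V_def)
  next
    case False
    with that(3) row_kind_le[of k]
    consider "row_kind i = 0" "row_kind k = 1" | "row_kind i = 0" "row_kind k = 2"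
      | "row_kind i = 1" "row_kind k = 2"
      by linarith
    then show ?thesis
    proof cases
      case 1
      then have "i \<in> {1,2}" "k \<notin> W" "k \<notin> {1,2}"
        using row_kind_iff(1,2) by blast+
      then have "row_ip h sign_cols i k = 0"
        using sign_part_even that(2) by blast
      with 1 show ?thesis by (simp add: balanced_def U_def V_def)
    next
      case 2
      then have factors: "U i = 1" "V i = \<alpha>" "U k = \<beta>" "V k = 1"
        by (simp_all add: U_def V_def)
      have cancel: "row_ip h twin_cols i k + row_ip h sign_cols i k = 0"
        using twin_sign_cancel_odd 2 by (simp add: row_kind_iff)
      show ?thesis using cond
      proof
        assume "\<beta> = cnj \<alpha>"
        then have "cnj \<beta> * row_ip h twin_cols i k + \<alpha> * row_ip h sign_cols i k
                     = \<alpha> * (row_ip h twin_cols i k + row_ip h sign_cols i k)"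
          by (simp add: distrib_left)
        then show ?thesis using factors cancel by (simp add: balanced_def)
      next
        assume "a = b"
        then have "row_ip h twin_cols i k = 0"
          using twin_part_odd_sym_corner 2 by (simp add: row_kind_iff)
        then show ?thesis using factors cancel by (simp add: balanced_def)
      qed
    next
      case 3
      then have "i \<notin> W" "i \<notin> {1,2}" "k \<in> W"
        using row_kind_iff(2,3) by blast+
      then have "row_ip h twin_cols i k = 0"
        using twin_part_even_odd that(1) by blast
      with 3 show ?thesis by (simp add: balanced_def U_def V_def)
    qed
  qed
  let ?h' = "\<lambda>i j. h i j * twist_factor \<alpha> \<beta> i j"
  have "balanced i k"
    using ordered[OF ik] ordered[OF ik(2,1)] swap by (meson nat_le_linear)
  moreover have "row_ip ?h' fixed_cols i k = 1 * cnj 1 * row_ip h fixed_cols i k"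
    by (rule row_ip_scaled) (auto simp: twist_factor_def)
  moreover have "row_ip ?h' twin_cols i k = U i * cnj (U k) * row_ip h twin_cols i k"
    by (rule row_ip_scaled) (auto simp: twist_factor_def U_def)
  moreover have "row_ip ?h' sign_cols i k = V i * cnj (V k) * row_ip h sign_cols i k"
    by (rule row_ip_scaled) (auto simp: twist_factor_def V_def)
  ultimately show ?thesis
    by (simp add: row_ip_split balanced_def)
qed

end

text \<open>Both claims of the theorem at once: the twisted block matrix is the entrywise
  product of H with the twist factors, the odd rows being the last s rows.\<close>
lemma twisted_block_hadamard:
  fixes p q r s n :: nat and a b \<alpha> \<beta> :: complex
    and x y z w :: "complex vec" and A B C D :: "complex mat"
  assumes dims: "3+p+q = n" "3+r+s = n"
    and vecs: "y \<in> carrier_vec q" "w \<in> carrier_vec s"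
    and H: "complex_hadamard n (block_mat p q r s a b x y z w A B C D)"
    and units: "cmod \<alpha> = 1" "cmod \<beta> = 1" and cond: "\<beta> = cnj \<alpha> \<or> a = b"
  shows "complex_hadamard n (block_mat p q r s a b x (\<alpha> \<cdot>\<^sub>v y) z (\<beta> \<cdot>\<^sub>v w) A B C D)"
proof -
  define M where "M = block_mat p q r s a b x y z w A B C D"
  define h where "h = (\<lambda>i j. M $$ (i,j))"
  have M: "M \<in> carrier_mat n n" and unit: "\<And>i j. i < n \<Longrightarrow> j < n \<Longrightarrow> cmod (h i j) = 1"
    and gram: "M * mat_adjoint M = of_nat n \<cdot>\<^sub>m 1\<^sub>m n"
    using H by (auto simp: complex_hadamard_def M_def h_def)
  interpret twin_rows h n p a b "{3+r..<n}"
  proof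
    show "row_ip h {..<n} i k = 0" if "i < n" "k < n" "i \<noteq> k" for i k
      using gram_entry[OF M that(1,2)] gram that by (simp add: h_def)
  qed (use dims in \<open>auto simp: h_def M_def block_mat_def\<close>)
  have twisted: "block_mat p q r s a b x (\<alpha> \<cdot>\<^sub>v y) z (\<beta> \<cdot>\<^sub>v w) A B C D $$ (i,j)
                   = h i j * twist_factor \<alpha> \<beta> i j" if "i < n" "j < n" for i j
    using that dims vecs
    by (auto simp: h_def M_def block_mat_def twist_factor_def row_kind_def)
  show ?thesis
  proof (rule complex_hadamard_same_gram[OF H])
    show "block_mat p q r s a b x (\<alpha> \<cdot>\<^sub>v y) z (\<beta> \<cdot>\<^sub>v w) A B C D \<in> carrier_mat n n"
      using dims by (simp add: block_mat_def)
  next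
    fix i j assume "i < n" "j < n"
    then show "cmod (block_mat p q r s a b x (\<alpha> \<cdot>\<^sub>v y) z (\<beta> \<cdot>\<^sub>v w) A B C D $$ (i,j)) = 1"
      using twisted unit units by (simp add: norm_mult twist_factor_def)
  next
    fix i k assume ik: "i < n" "k < n"
    have "row_ip (\<lambda>i j. block_mat p q r s a b x (\<alpha> \<cdot>\<^sub>v y) z (\<beta> \<cdot>\<^sub>v w) A B C D $$ (i,j)) {..<n} i k
          = row_ip (\<lambda>i j. h i j * twist_factor \<alpha> \<beta> i j) {..<n} i k"
      unfolding row_ip_def using twisted ik by (intro sum.cong) auto
    then show "row_ip (\<lambda>i j. block_mat p q r s a b x (\<alpha> \<cdot>\<^sub>v y) z (\<beta> \<cdot>\<^sub>v w) A B C D $$ (i,j)) {..<n} i k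
          = row_ip (\<lambda>i j. block_mat p q r s a b x y z w A B C D $$ (i,j)) {..<n} i k"
      using twist_preserves_row_ip[OF units cond ik] by (simp add: h_def M_def)
  qed
qed

theorem theorem1:
  fixes p q r s n :: nat and a b :: complex
    and x y z w :: "complex vec" and A B C D :: "complex mat"
  assumes dims: "3+p+q = n" "3+r+s = n"
    and ab: "cmod a = 1" "cmod b = 1"
    and vecs: "x \<in> carrier_vec p" "y \<in> carrier_vec q" "z \<in> carrier_vec r" "w \<in> carrier_vec s"
    and mats: "A \<in> carrier_mat r p" "B \<in> carrier_mat r q" "C \<in> carrier_mat s p" "D \<in> carrier_mat s q"
    and H: "complex_hadamard n (block_mat p q r s a b x y z w A B C D)"
  shows "(\<forall>\<alpha>. cmod \<alpha> = 1 \<longrightarrow>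
           complex_hadamard n (block_mat p q r s a b x (\<alpha> \<cdot>\<^sub>v y) z (cnj \<alpha> \<cdot>\<^sub>v w) A B C D)) \<and>
         (b = a \<longrightarrow> (\<forall>\<alpha> \<gamma>. cmod \<alpha> = 1 \<longrightarrow> cmod \<gamma> = 1 \<longrightarrow>
           complex_hadamard n (block_mat p q r s a b x (\<alpha> \<cdot>\<^sub>v y) z (\<gamma> \<cdot>\<^sub>v w) A B C D)))"
  using twisted_block_hadamard[OF dims vecs(2,4) H] by auto

end
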